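(* If $\mu\preceq\mu'$ and $v$ is a move on an interval $[a,b]$ that can be applied to $\mu$, then $v\mu\preceq\bar v\mu'$, where $\bar v$ is the extreme move on $[a,b]$.
   Context: A distribution is a finite set $\{(x_1,m_1),\dots,(x_k,m_k)\}$, $m_i>0$; $\mu(A)=\sum_{x_i\in A}m_i$; $M_j[\mu]=\sum_im_ix_i^j$. A move $v=([a,b],\delta)$ has $\delta$ a signed distribution on $[a,b]$ with $M_0[\delta]=M_1[\delta]=0$; it applies to $\mu$ if $\mu+\delta$ is a distribution, and $v\mu=\mu+\delta$. The extreme move $\bar v$ on $[a,b]$ maps any distribution $\mu$ to the distribution $\mu'$ with $\mu'\{a<x<b\}=0$, $\mu'(\{x\})=\mu(\{x\})$ for $x\notin[a,b]$, and $M_0[\mu']=M_0[\mu]$, $M_1[\mu']=M_1[\mu]$. $\mu'$ is a basic split of $\mu$ if obtained by replacing one point mass $(x_i,m_i)$ by finitely many point masses of total mass $m_i$ and center of mass $x_i$; $\mu\preceq\mu'$ if $\mu'$ is obtained from $\mu$ by zero or more basic splits. *)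

theory Defs
  imports Complex_Main
begin

text \<open>A (signed) distribution on the real line is represented by its mass function
  \<open>\<mu> :: real \<Rightarrow> real\<close>, \<open>\<mu> x\<close> being the mass at the point \<open>x\<close>; the support is finite.
  A distribution has nonnegative masses (the points of positive mass are the
  pairs \<open>(x_i, m_i)\<close>).\<close>

definition supp :: "(real \<Rightarrow> real) \<Rightarrow> real set" where
  "supp \<mu> = {x. \<mu> x \<noteq> 0}"

definition signed_distribution :: "(real \<Rightarrow> real) \<Rightarrow> bool" where
  "signed_distribution \<mu> \<longleftrightarrow> finite (supp \<mu>)"

definition distribution :: "(real \<Rightarrow> real) \<Rightarrow> bool" where
  "distribution \<mu> \<longleftrightarrow> finite (supp \<mu>) \<and> (\<forall>x. 0 \<le> \<mu> x)"

definition moment :: "nat \<Rightarrow> (real \<Rightarrow> real) \<Rightarrow> real" where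
  "moment j \<mu> = (\<Sum>x\<in>supp \<mu>. \<mu> x * x ^ j)"

definition is_move :: "real \<Rightarrow> real \<Rightarrow> (real \<Rightarrow> real) \<Rightarrow> bool" where
  "is_move a b \<delta> \<longleftrightarrow> signed_distribution \<delta> \<and> supp \<delta> \<subseteq> {a..b}
      \<and> moment 0 \<delta> = 0 \<and> moment 1 \<delta> = 0"

definition move_applies :: "(real \<Rightarrow> real) \<Rightarrow> (real \<Rightarrow> real) \<Rightarrow> bool" where
  "move_applies \<delta> \<mu> \<longleftrightarrow> distribution (\<lambda>x. \<mu> x + \<delta> x)"

definition apply_move :: "(real \<Rightarrow> real) \<Rightarrow> (real \<Rightarrow> real) \<Rightarrow> (real \<Rightarrow> real)" where
  "apply_move \<delta> \<mu> = (\<lambda>x. \<mu> x + \<delta> x)"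

text \<open>\<open>extreme_result a b \<mu> \<mu>'\<close>: \<open>\<mu>'\<close> is the result of applying the extreme move on \<open>[a,b]\<close>
  to \<open>\<mu>\<close> (this determines \<open>\<mu>'\<close> uniquely).\<close>
definition extreme_result :: "real \<Rightarrow> real \<Rightarrow> (real \<Rightarrow> real) \<Rightarrow> (real \<Rightarrow> real) \<Rightarrow> bool" where
  "extreme_result a b \<mu> \<mu>' \<longleftrightarrow> distribution \<mu>'
      \<and> (\<forall>x. a < x \<and> x < b \<longrightarrow> \<mu>' x = 0)
      \<and> (\<forall>x. x \<notin> {a..b} \<longrightarrow> \<mu>' x = \<mu> x)
      \<and> moment 0 \<mu>' = moment 0 \<mu> \<and> moment 1 \<mu>' = moment 1 \<mu>"

definition basic_split :: "(real \<Rightarrow> real) \<Rightarrow> (real \<Rightarrow> real) \<Rightarrow> bool" where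
  "basic_split \<mu> \<mu>' \<longleftrightarrow> distribution \<mu> \<and>
     (\<exists>x \<nu>. 0 < \<mu> x \<and> distribution \<nu> \<and> moment 0 \<nu> = \<mu> x \<and> moment 1 \<nu> = x * \<mu> x
        \<and> \<mu>' = (\<lambda>y. (if y = x then 0 else \<mu> y) + \<nu> y))"

definition split_le :: "(real \<Rightarrow> real) \<Rightarrow> (real \<Rightarrow> real) \<Rightarrow> bool" (infix "\<preceq>\<^sub>s" 50) where
  "\<mu> \<preceq>\<^sub>s \<mu>' \<longleftrightarrow> basic_split\<^sup>*\<^sup>* \<mu> \<mu>'"

end

theory Submission
  imports Defs
begin

text \<open>
  The extreme move on \<open>[a, b]\<close> is the linear map \<open>collapse a b\<close>, which sends the mass at
  each \<open>x \<in> (a, b)\<close> to \<open>a\<close> and \<open>b\<close> in the ratio \<open>(b - x) : (x - a)\<close>, preserving mass and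
  centre of mass. A signed distribution is determined by its values off \<open>{a, b}\<close> and its
  first two moments, so \<open>\<mu>'' = collapse a b \<mu>'\<close> and the collapse of the move \<open>\<delta>\<close> vanishes.
  Moreover \<open>v\<mu> \<preceq> collapse a b (v\<mu>) = collapse a b \<mu>\<close>, since every interior atom splits into
  two endpoint atoms. It remains that collapsing is monotone for \<open>\<preceq>\<close>. The only nontrivial
  case is the split of an interior atom of mass \<open>m\<close> at \<open>x\<close> into some \<open>\<nu>\<close>: then
  \<open>\<tau> = collapse a b \<nu>\<close> has no mass in \<open>(a, b)\<close> and must be reached from
  \<open>collapse a b (point_mass x m)\<close> by splits. Read backwards, repeatedly merge two atoms of
  \<open>\<tau>\<close> on opposite sides of \<open>a\<close> (or of \<open>b\<close>) into that endpoint so that an atom outside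
  \<open>[a, b]\<close> disappears; the centre of mass \<open>x\<close> lying strictly inside \<open>(a, b)\<close> guarantees
  that enough mass is available for this.
\<close>

definition point_mass :: "real \<Rightarrow> real \<Rightarrow> real \<Rightarrow> real" where
  "point_mass x m = (\<lambda>y. if y = x then m else 0)"

definition weighted_sum :: "(real \<Rightarrow> real) \<Rightarrow> (real \<Rightarrow> real) \<Rightarrow> real" where
  "weighted_sum f h = (\<Sum>x\<in>supp f. f x * h x)"

lemma supp_point_mass: "supp (point_mass x m) \<subseteq> {x}"
  by (auto simp: supp_def point_mass_def)

lemma finite_supp_point_mass [simp]: "finite (supp (point_mass x m))"
  using supp_point_mass finite_subset by blast

lemma supp_zero [simp]: "supp (\<lambda>_. 0) = {}"
  by (simp add: supp_def)

lemma finite_supp_add: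
  "finite (supp f) \<Longrightarrow> finite (supp g) \<Longrightarrow> finite (supp (\<lambda>x. f x + g x))"
  by (rule finite_subset[of _ "supp f \<union> supp g"]) (auto simp: supp_def)

lemma finite_supp_diff:
  "finite (supp f) \<Longrightarrow> finite (supp g) \<Longrightarrow> finite (supp (\<lambda>x. f x - g x))"
  by (rule finite_subset[of _ "supp f \<union> supp g"]) (auto simp: supp_def)

lemma distribution_point_mass: "0 \<le> m \<Longrightarrow> distribution (point_mass x m)"
  by (simp add: distribution_def) (simp add: point_mass_def)

lemma weighted_sum_superset:
  assumes "finite S" "supp f \<subseteq> S"
  shows "weighted_sum f h = (\<Sum>x\<in>S. f x * h x)"
  unfolding weighted_sum_def
  by (rule sum.mono_neutral_left) (use assms in \<open>auto simp: supp_def\<close>)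

lemma weighted_sum_cong:
  "(\<And>x. x \<in> supp f \<Longrightarrow> h x = h' x) \<Longrightarrow> weighted_sum f h = weighted_sum f h'"
  unfolding weighted_sum_def by simp

lemma weighted_sum_add:
  assumes "finite (supp f)" "finite (supp g)"
  shows "weighted_sum (\<lambda>x. f x + g x) h = weighted_sum f h + weighted_sum g h"
proof -
  let ?S = "supp f \<union> supp g"
  have "supp (\<lambda>x. f x + g x) \<subseteq> ?S" by (auto simp: supp_def)
  then show ?thesis
    using assms by (simp add: weighted_sum_superset[of ?S] distrib_right sum.distrib)
qed

lemma weighted_sum_diff:
  assumes "finite (supp f)" "finite (supp g)"
  shows "weighted_sum (\<lambda>x. f x - g x) h = weighted_sum f h - weighted_sum g h"
proof -
  let ?S = "supp f \<union> supp g"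
  have "supp (\<lambda>x. f x - g x) \<subseteq> ?S" by (auto simp: supp_def)
  then show ?thesis
    using assms by (simp add: weighted_sum_superset[of ?S] left_diff_distrib sum_subtractf)
qed

lemma weighted_sum_point_mass [simp]: "weighted_sum (point_mass x m) h = m * h x"
  by (simp add: weighted_sum_superset[OF _ supp_point_mass]) (simp add: point_mass_def)

lemma weighted_sum_nonneg:
  "distribution f \<Longrightarrow> (\<And>x. 0 \<le> h x) \<Longrightarrow> 0 \<le> weighted_sum f h"
  unfolding weighted_sum_def distribution_def by (simp add: sum_nonneg)

lemma moment_eq_weighted_sum: "moment j f = weighted_sum f (\<lambda>x. x ^ j)"
  by (simp add: moment_def weighted_sum_def)

lemma moment_zero [simp]: "moment j (\<lambda>_. 0) = 0"
  by (simp add: moment_def)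

lemma moment_point_mass [simp]: "moment j (point_mass x m) = m * x ^ j"
  by (simp add: moment_eq_weighted_sum)

lemma weighted_sum_affine:
  "weighted_sum f (\<lambda>x. c * x + d) = c * moment 1 f + d * moment 0 f"
  by (simp add: moment_def weighted_sum_def algebra_simps sum.distrib sum_distrib_left)

lemma two_terms_le_weighted_sum:
  assumes "finite (supp f)" "p \<noteq> q"
    and "\<And>x. x \<in> supp f \<Longrightarrow> x \<noteq> p \<Longrightarrow> x \<noteq> q \<Longrightarrow> 0 \<le> f x * h x"
  shows "f p * h p + f q * h q \<le> weighted_sum f h"
proof -
  let ?S = "supp f \<union> {p, q}"
  have "f p * h p + f q * h q = (\<Sum>x\<in>{p, q}. f x * h x)"
    using assms(2) by simp
  also have "\<dots> \<le> (\<Sum>x\<in>?S. f x * h x)"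
    by (rule sum_mono2) (use assms in auto)
  also have "\<dots> = weighted_sum f h"
    by (rule weighted_sum_superset[symmetric]) (use assms(1) in auto)
  finally show ?thesis .
qed

lemma eq_if_moments_eq_off_two_points:
  assumes "finite (supp f)" "finite (supp g)"
    and "\<And>x. x \<noteq> a \<Longrightarrow> x \<noteq> b \<Longrightarrow> f x = g x"
    and "moment 0 f = moment 0 g" "moment 1 f = moment 1 g"
  shows "f = g"
proof -
  define h where "h x = f x - g x" for x
  have supp_h: "supp h \<subseteq> {a, b}"
    using assms(3) by (auto simp: supp_def h_def)
  have moment_h: "weighted_sum h (\<lambda>x. x ^ j) = (\<Sum>x\<in>{a, b}. h x * x ^ j)" for j
    by (rule weighted_sum_superset[OF _ supp_h]) simp
  have "moment j h = 0" if "j \<le> 1" for j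
    using that assms(4,5) unfolding h_def
    by (auto simp: moment_eq_weighted_sum weighted_sum_diff assms(1,2) le_Suc_eq)
  then have sum_h: "(\<Sum>x\<in>{a, b}. h x * x ^ j) = 0" if "j \<le> 1" for j
    using that by (simp add: moment_eq_weighted_sum moment_h)
  have "h a = 0 \<and> h b = 0"
  proof (cases "a = b")
    case False
    then have "h a + h b = 0" "h a * a + h b * b = 0"
      using sum_h[of 0] sum_h[of 1] by simp_all
    moreover have "(a - b) * h a = (h a * a + h b * b) - b * (h a + h b)"
      by (simp add: algebra_simps)
    ultimately show ?thesis
      using False by simp
  qed (use sum_h[of 0] in simp)
  with assms(3) show ?thesis
    by (metis h_def eq_iff_diff_eq_0 ext)
qed

lemma split_le_refl [simp]: "\<mu> \<preceq>\<^sub>s \<mu>"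
  by (simp add: split_le_def)

lemma split_le_trans [trans]: "\<mu> \<preceq>\<^sub>s \<mu>' \<Longrightarrow> \<mu>' \<preceq>\<^sub>s \<mu>'' \<Longrightarrow> \<mu> \<preceq>\<^sub>s \<mu>''"
  unfolding split_le_def by (rule rtranclp_trans)

lemma distribution_if_basic_split: "basic_split \<mu> \<mu>' \<Longrightarrow> distribution \<mu>'"
proof -
  assume "basic_split \<mu> \<mu>'"
  then obtain x \<nu> where "distribution \<mu>" "distribution \<nu>"
    and \<mu>': "\<mu>' = (\<lambda>y. (if y = x then 0 else \<mu> y) + \<nu> y)"
    unfolding basic_split_def by blast
  moreover have "supp \<mu>' \<subseteq> supp \<mu> \<union> supp \<nu>"
    unfolding \<mu>' supp_def by auto
  ultimately show ?thesis
    unfolding distribution_def \<mu>' by (auto intro: finite_subset add_nonneg_nonneg)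
qed

lemma split_le_distribution: "\<mu> \<preceq>\<^sub>s \<mu>' \<Longrightarrow> distribution \<mu> \<Longrightarrow> distribution \<mu>'"
  unfolding split_le_def
  by (induction rule: rtranclp_induct) (auto intro: distribution_if_basic_split)

lemma point_mass_split_le:
  assumes "distribution \<nu>" "0 < m" "moment 0 \<nu> = m" "moment 1 \<nu> = m * x"
  shows "point_mass x m \<preceq>\<^sub>s \<nu>"
proof -
  have "basic_split (point_mass x m) \<nu>"
    unfolding basic_split_def
  proof (intro conjI exI)
    show "\<nu> = (\<lambda>y. (if y = x then 0 else point_mass x m y) + \<nu> y)"
      by (rule ext) (simp add: point_mass_def)
  qed (use assms distribution_point_mass[of m x] in \<open>auto simp: point_mass_def mult.commute\<close>)
  then show ?thesis
    by (simp add: split_le_def)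
qed

lemma basic_split_add:
  assumes "distribution \<rho>" "basic_split \<mu> \<mu>'"
  shows "basic_split (\<lambda>y. \<rho> y + \<mu> y) (\<lambda>y. \<rho> y + \<mu>' y)"
proof -
  obtain x \<nu> where "distribution \<mu>" "0 < \<mu> x" "distribution \<nu>"
    and \<nu>: "moment 0 \<nu> = \<mu> x" "moment 1 \<nu> = x * \<mu> x"
    and \<mu>': "\<mu>' = (\<lambda>y. (if y = x then 0 else \<mu> y) + \<nu> y)"
    using assms(2) unfolding basic_split_def by blast
  have "distribution (\<lambda>y. \<rho> y + \<mu> y)" "distribution (\<lambda>y. \<nu> y + point_mass x (\<rho> x) y)"
    using assms(1) \<open>distribution \<mu>\<close> \<open>distribution \<nu>\<close> distribution_point_mass[of "\<rho> x" x]
    by (auto simp: distribution_def intro: finite_supp_add)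
  moreover have "moment 0 (\<lambda>y. \<nu> y + point_mass x (\<rho> x) y) = \<rho> x + \<mu> x"
    "moment 1 (\<lambda>y. \<nu> y + point_mass x (\<rho> x) y) = x * (\<rho> x + \<mu> x)"
    using \<nu> \<open>distribution \<nu>\<close>
    by (simp_all add: moment_eq_weighted_sum weighted_sum_add distribution_def algebra_simps)
  moreover have "(\<lambda>y. \<rho> y + \<mu>' y) =
      (\<lambda>y. (if y = x then 0 else \<rho> y + \<mu> y) + (\<nu> y + point_mass x (\<rho> x) y))"
    by (auto simp: \<mu>' point_mass_def)
  ultimately show ?thesis
    using assms(1) \<open>0 < \<mu> x\<close> unfolding basic_split_def distribution_def
    by (intro conjI exI[of _ x] exI[of _ "\<lambda>y. \<nu> y + point_mass x (\<rho> x) y"])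
      (auto intro: add_nonneg_pos)
qed

lemma split_le_add:
  assumes "distribution \<rho>" "\<mu> \<preceq>\<^sub>s \<mu>'"
  shows "(\<lambda>y. \<rho> y + \<mu> y) \<preceq>\<^sub>s (\<lambda>y. \<rho> y + \<mu>' y)"
  using assms(2) unfolding split_le_def
  by (induction rule: rtranclp_induct)
    (auto intro: basic_split_add[OF assms(1)] rtranclp.rtrancl_into_rtrancl)

definition collapse :: "real \<Rightarrow> real \<Rightarrow> (real \<Rightarrow> real) \<Rightarrow> real \<Rightarrow> real" where
  "collapse a b f = (\<lambda>y. (if a < y \<and> y < b then 0 else f y)
     + point_mass a (weighted_sum f (\<lambda>x. if a < x \<and> x < b then (b - x) / (b - a) else 0)) y
     + point_mass b (weighted_sum f (\<lambda>x. if a < x \<and> x < b then (x - a) / (b - a) else 0)) y)"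

lemma collapse_interior: "a < y \<Longrightarrow> y < b \<Longrightarrow> collapse a b f y = 0"
  by (simp add: collapse_def point_mass_def)

lemma collapse_outside:
  "y \<notin> {a, b} \<Longrightarrow> \<not> (a < y \<and> y < b) \<Longrightarrow> collapse a b f y = f y"
  by (auto simp: collapse_def point_mass_def)

lemma collapse_eq_self:
  assumes "\<And>y. a < y \<Longrightarrow> y < b \<Longrightarrow> f y = 0"
  shows "collapse a b f = f"
proof -
  have "weighted_sum f (\<lambda>x. if a < x \<and> x < b then w x else 0) = 0" for w
    by (subst weighted_sum_cong[where h' = "\<lambda>_. 0"]) (use assms in \<open>auto simp: supp_def weighted_sum_def\<close>)
  then show ?thesis
    unfolding collapse_def using assms by (auto simp: point_mass_def)
qed

lemma collapse_idem: "collapse a b (collapse a b f) = collapse a b f"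
  by (rule collapse_eq_self) (rule collapse_interior)

lemma supp_collapse: "supp (collapse a b f) \<subseteq> supp f \<union> {a, b}"
  by (auto simp: collapse_def point_mass_def supp_def)

lemma finite_supp_collapse: "finite (supp f) \<Longrightarrow> finite (supp (collapse a b f))"
  using supp_collapse by (rule finite_subset) simp

lemma distribution_collapse:
  assumes "distribution f"
  shows "distribution (collapse a b f)"
proof -
  have "0 \<le> weighted_sum f (\<lambda>x. if a < x \<and> x < b then (b - x) / (b - a) else 0)"
    "0 \<le> weighted_sum f (\<lambda>x. if a < x \<and> x < b then (x - a) / (b - a) else 0)"
    using assms by (auto intro!: weighted_sum_nonneg)
  then have "0 \<le> collapse a b f y" for y
    using assms by (simp add: collapse_def point_mass_def distribution_def)
  then show ?thesis
    using assms finite_supp_collapse by (simp add: distribution_def)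
qed

lemma collapse_add:
  assumes "finite (supp f)" "finite (supp g)"
  shows "collapse a b (\<lambda>y. f y + g y) = (\<lambda>y. collapse a b f y + collapse a b g y)"
  using assms by (auto simp: collapse_def point_mass_def weighted_sum_add)

lemma moment_collapse:
  assumes "finite (supp f)" "j \<le> 1"
  shows "moment j (collapse a b f) = moment j f"
proof -
  let ?inside = "\<lambda>x. a < x \<and> x < b"
  let ?wa = "\<lambda>x. if ?inside x then (b - x) / (b - a) else 0"
  let ?wb = "\<lambda>x. if ?inside x then (x - a) / (b - a) else 0"
  let ?f_out = "\<lambda>y. if ?inside y then 0 else f y"
  have "finite (supp ?f_out)"
    by (rule finite_subset[OF _ assms(1)]) (auto simp: supp_def)
  then have "moment j (collapse a b f)
      = weighted_sum ?f_out (\<lambda>x. x ^ j) + weighted_sum f ?wa * a ^ j + weighted_sum f ?wb * b ^ j"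
    unfolding collapse_def moment_eq_weighted_sum
    by (simp add: weighted_sum_add finite_supp_add)
  also have "weighted_sum ?f_out (\<lambda>x. x ^ j) = weighted_sum f (\<lambda>x. if ?inside x then 0 else x ^ j)"
    by (subst weighted_sum_superset[OF assms(1)]) (auto simp: supp_def weighted_sum_def intro!: sum.cong)
  also have "\<dots> + weighted_sum f ?wa * a ^ j + weighted_sum f ?wb * b ^ j
      = weighted_sum f (\<lambda>x. (if ?inside x then 0 else x ^ j) + ?wa x * a ^ j + ?wb x * b ^ j)"
    by (simp add: weighted_sum_def sum.distrib sum_distrib_right ring_distribs mult.assoc)
  also have "\<dots> = weighted_sum f (\<lambda>x. x ^ j)"
  proof (rule weighted_sum_cong)
    fix x
    show "(if ?inside x then 0 else x ^ j) + ?wa x * a ^ j + ?wb x * b ^ j = x ^ j"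
    proof (cases "?inside x")
      case True
      have "?wa x * a ^ j + ?wb x * b ^ j = ((b - x) * a ^ j + (x - a) * b ^ j) / (b - a)"
        using True by (simp add: add_divide_distrib)
      also have "(b - x) * a ^ j + (x - a) * b ^ j = x ^ j * (b - a)"
        using assms(2) by (cases j) (auto simp: algebra_simps)
      finally show ?thesis
        using True by simp
    qed auto
  qed
  finally show ?thesis
    by (simp add: moment_eq_weighted_sum)
qed

lemma distribution_remove_point:
  assumes "distribution \<sigma>"
  shows "distribution (\<lambda>z. if z = y then 0 else \<sigma> z)"
    and "\<sigma> = (\<lambda>z. (if z = y then 0 else \<sigma> z) + point_mass y (\<sigma> y) z)"
proof -
  have "supp (\<lambda>z. if z = y then 0 else \<sigma> z) \<subseteq> supp \<sigma>"
    by (auto simp: supp_def)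
  then show "distribution (\<lambda>z. if z = y then 0 else \<sigma> z)"
    using assms by (auto simp: distribution_def intro: finite_subset)
  show "\<sigma> = (\<lambda>z. (if z = y then 0 else \<sigma> z) + point_mass y (\<sigma> y) z)"
    by (auto simp: point_mass_def)
qed

lemma point_mass_split_le_collapse:
  "0 < m \<Longrightarrow> point_mass y m \<preceq>\<^sub>s collapse a b (point_mass y m)"
  by (intro point_mass_split_le distribution_collapse distribution_point_mass)
    (simp_all add: moment_collapse)

lemma split_le_collapse:
  assumes "distribution \<sigma>"
  shows "\<sigma> \<preceq>\<^sub>s collapse a b \<sigma>"
  using assms
proof (induction "card (supp \<sigma> \<inter> {a<..<b})" arbitrary: \<sigma> rule: less_induct)
  case less
  show ?case
  proof (cases "supp \<sigma> \<inter> {a<..<b} = {}")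
    case True
    then have "collapse a b \<sigma> = \<sigma>"
      by (intro collapse_eq_self) (auto simp: supp_def)
    then show ?thesis
      by simp
  next
    case False
    then obtain y where y: "y \<in> supp \<sigma>" "a < y" "y < b"
      by auto
    define \<sigma>\<^sub>0 where "\<sigma>\<^sub>0 = (\<lambda>z. if z = y then 0 else \<sigma> z)"
    define \<sigma>\<^sub>1 where "\<sigma>\<^sub>1 = (\<lambda>z. \<sigma>\<^sub>0 z + collapse a b (point_mass y (\<sigma> y)) z)"
    have dist_\<sigma>\<^sub>0: "distribution \<sigma>\<^sub>0" and \<sigma>: "\<sigma> = (\<lambda>z. \<sigma>\<^sub>0 z + point_mass y (\<sigma> y) z)"
      unfolding \<sigma>\<^sub>0_def using distribution_remove_point[OF less.prems] by blast+
    have fin: "finite (supp \<sigma>)" "finite (supp \<sigma>\<^sub>0)"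
      using less.prems dist_\<sigma>\<^sub>0 by (simp_all add: distribution_def)
    have "0 < \<sigma> y"
      using y(1) less.prems by (auto simp: supp_def distribution_def order_le_less)
    then have "\<sigma> \<preceq>\<^sub>s \<sigma>\<^sub>1"
      unfolding \<sigma>\<^sub>1_def
      by (subst \<sigma>) (intro split_le_add[OF dist_\<sigma>\<^sub>0] point_mass_split_le_collapse)
    moreover have "\<sigma>\<^sub>1 \<preceq>\<^sub>s collapse a b \<sigma>\<^sub>1"
    proof (rule less.hyps)
      have "supp \<sigma>\<^sub>1 \<inter> {a<..<b} = supp \<sigma> \<inter> {a<..<b} - {y}"
        by (auto simp: \<sigma>\<^sub>1_def \<sigma>\<^sub>0_def supp_def collapse_interior)
      then show "card (supp \<sigma>\<^sub>1 \<inter> {a<..<b}) < card (supp \<sigma> \<inter> {a<..<b})"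
        using y fin(1) card_Diff1_less[of "supp \<sigma> \<inter> {a<..<b}" y]
        by (auto simp del: card_Diff_insert card_Diff_singleton)
      show "distribution \<sigma>\<^sub>1"
        using split_le_distribution[OF \<open>\<sigma> \<preceq>\<^sub>s \<sigma>\<^sub>1\<close> less.prems] .
    qed
    moreover have "collapse a b \<sigma>\<^sub>1 = collapse a b \<sigma>"
      using fin(2) by (subst \<sigma>)
        (simp add: \<sigma>\<^sub>1_def collapse_add collapse_idem finite_supp_collapse)
    ultimately show ?thesis
      by (metis split_le_trans)
  qed
qed

definition merge :: "(real \<Rightarrow> real) \<Rightarrow> real \<Rightarrow> real \<Rightarrow> real \<Rightarrow> real \<Rightarrow> real \<Rightarrow> real \<Rightarrow> real" where
  "merge \<tau> p s q t e =
     (\<lambda>y. \<tau> y - point_mass p s y - point_mass q t y + point_mass e (s + t) y)"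

definition admissible_merge ::
    "(real \<Rightarrow> real) \<Rightarrow> real \<Rightarrow> real \<Rightarrow> real \<Rightarrow> real \<Rightarrow> real \<Rightarrow> bool" where
  "admissible_merge \<tau> p s q t e \<longleftrightarrow> p \<noteq> q \<and> 0 \<le> s \<and> s \<le> \<tau> p \<and> 0 \<le> t \<and> t \<le> \<tau> q
     \<and> 0 < s + t \<and> p * s + q * t = e * (s + t)"

lemma merge_split_le:
  assumes "distribution \<tau>" "admissible_merge \<tau> p s q t e"
  shows "distribution (merge \<tau> p s q t e)" and "merge \<tau> p s q t e \<preceq>\<^sub>s \<tau>"
proof -
  define \<rho> where "\<rho> = (\<lambda>y. \<tau> y - point_mass p s y - point_mass q t y)"
  define \<nu> where "\<nu> = (\<lambda>y. point_mass p s y + point_mass q t y)"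
  have "finite (supp \<tau>)" "\<And>y. 0 \<le> \<tau> y"
    using assms(1) by (auto simp: distribution_def)
  moreover have "finite (supp \<rho>)" "finite (supp \<nu>)"
    unfolding \<rho>_def \<nu>_def using \<open>finite (supp \<tau>)\<close>
    by (simp_all add: finite_supp_diff finite_supp_add)
  ultimately have dist_\<rho>: "distribution \<rho>" and dist_\<nu>: "distribution \<nu>"
    using assms(2) unfolding distribution_def admissible_merge_def \<rho>_def \<nu>_def
    by (auto simp: point_mass_def)
  have merge: "merge \<tau> p s q t e = (\<lambda>y. \<rho> y + point_mass e (s + t) y)"
    by (simp add: merge_def \<rho>_def)
  show "distribution (merge \<tau> p s q t e)"
    using dist_\<rho> distribution_point_mass[of "s + t" e] assms(2)
    unfolding merge distribution_def admissible_merge_def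
    by (auto intro: finite_supp_add add_nonneg_nonneg)
  have "point_mass e (s + t) \<preceq>\<^sub>s \<nu>"
    using dist_\<nu> assms(2) unfolding admissible_merge_def
    by (intro point_mass_split_le)
      (simp_all add: \<nu>_def moment_eq_weighted_sum weighted_sum_add algebra_simps)
  then have "merge \<tau> p s q t e \<preceq>\<^sub>s (\<lambda>y. \<rho> y + \<nu> y)"
    unfolding merge by (rule split_le_add[OF dist_\<rho>])
  also have "(\<lambda>y. \<rho> y + \<nu> y) = \<tau>"
    by (simp add: \<rho>_def \<nu>_def)
  finally show "merge \<tau> p s q t e \<preceq>\<^sub>s \<tau>" .
qed

lemma supp_merge:
  assumes "admissible_merge \<tau> p s q t e"
  shows "supp (merge \<tau> p s q t e) \<subseteq> supp \<tau> \<union> {e}"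
  using assms by (auto simp: supp_def merge_def point_mass_def admissible_merge_def)

lemma moment_merge:
  assumes "finite (supp \<tau>)" "admissible_merge \<tau> p s q t e" "j \<le> 1"
  shows "moment j (merge \<tau> p s q t e) = moment j \<tau>"
proof -
  have "moment j (merge \<tau> p s q t e) = moment j \<tau> - s * p ^ j - t * q ^ j + (s + t) * e ^ j"
    using assms(1) unfolding merge_def moment_eq_weighted_sum
    by (simp add: weighted_sum_add weighted_sum_diff finite_supp_add finite_supp_diff)
  then show ?thesis
    using assms(2,3) by (cases j) (auto simp: admissible_merge_def algebra_simps)
qed

lemma admissible_merge_exists:
  assumes "p < e" "e < q" "0 < \<tau> p" "0 < \<tau> q"
  obtains s t where "admissible_merge \<tau> p s q t e"
    and "\<tau> p * (e - p) \<le> \<tau> q * (q - e) \<Longrightarrow> s = \<tau> p"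
    and "\<tau> q * (q - e) \<le> \<tau> p * (e - p) \<Longrightarrow> t = \<tau> q"
proof (cases "\<tau> p * (e - p) \<le> \<tau> q * (q - e)")
  case True
  show ?thesis
  proof (rule that[of "\<tau> p" "\<tau> p * (e - p) / (q - e)"])
    show "admissible_merge \<tau> p (\<tau> p) q (\<tau> p * (e - p) / (q - e)) e"
      using assms True unfolding admissible_merge_def
      by (auto simp: field_simps)
    show "\<tau> p * (e - p) / (q - e) = \<tau> q" if "\<tau> q * (q - e) \<le> \<tau> p * (e - p)"
      using assms True that by (simp add: field_simps)
  qed simp
next
  case False
  show ?thesis
  proof (rule that[of "\<tau> q * (q - e) / (e - p)" "\<tau> q"])
    show "admissible_merge \<tau> p (\<tau> q * (q - e) / (e - p)) q (\<tau> q) e"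
      using assms False unfolding admissible_merge_def
      by (auto simp: field_simps)
  qed (use False in simp_all)
qed

lemma lever_left_of_interval_le:
  assumes "distribution \<tau>" "a < x" "x < b"
    and no_interior: "\<And>y. a < y \<Longrightarrow> y < b \<Longrightarrow> \<tau> y = 0"
    and centre: "moment 1 \<tau> = moment 0 \<tau> * x"
    and "p \<in> supp \<tau>" "p < a" "\<forall>y\<in>supp \<tau>. y \<le> b"
  shows "\<tau> p * (a - p) \<le> \<tau> b * (b - a)"
proof -
  have "\<tau> p * (a - p) + \<tau> b * (a - b) \<le> weighted_sum \<tau> (\<lambda>y. a - y)"
  proof (rule two_terms_le_weighted_sum[where h = "\<lambda>y. a - y"])
    fix y
    assume "y \<in> supp \<tau>" "y \<noteq> p" "y \<noteq> b"
    then have "y \<le> a"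
      using assms(8) no_interior[of y] by (force simp: supp_def)
    then show "0 \<le> \<tau> y * (a - y)"
      using assms(1) by (simp add: distribution_def)
  qed (use assms in \<open>auto simp: distribution_def\<close>)
  also have "\<dots> = moment 0 \<tau> * (a - x)"
    using weighted_sum_affine[of \<tau> "-1" a] centre by (simp add: algebra_simps)
  also have "\<dots> \<le> 0"
    using assms(1,2) by (simp add: mult_nonneg_nonpos moment_eq_weighted_sum weighted_sum_nonneg)
  finally show ?thesis
    by (simp add: algebra_simps)
qed

lemma lever_right_of_interval_le:
  assumes "distribution \<tau>" "a < x" "x < b"
    and no_interior: "\<And>y. a < y \<Longrightarrow> y < b \<Longrightarrow> \<tau> y = 0"
    and centre: "moment 1 \<tau> = moment 0 \<tau> * x"
    and "q \<in> supp \<tau>" "b < q" "\<forall>y\<in>supp \<tau>. a \<le> y"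
  shows "\<tau> q * (q - b) \<le> \<tau> a * (b - a)"
proof -
  have "\<tau> a * (a - b) + \<tau> q * (q - b) \<le> weighted_sum \<tau> (\<lambda>y. y - b)"
  proof (rule two_terms_le_weighted_sum[where h = "\<lambda>y. y - b"])
    fix y
    assume "y \<in> supp \<tau>" "y \<noteq> a" "y \<noteq> q"
    then have "b \<le> y"
      using assms(8) no_interior[of y] by (force simp: supp_def)
    then show "0 \<le> \<tau> y * (y - b)"
      using assms(1) by (simp add: distribution_def)
  qed (use assms in \<open>auto simp: distribution_def\<close>)
  also have "\<dots> = moment 0 \<tau> * (x - b)"
    using weighted_sum_affine[of \<tau> 1 "-b"] centre by (simp add: algebra_simps)
  also have "\<dots> \<le> 0"
    using assms(1,3) by (simp add: mult_nonneg_nonpos moment_eq_weighted_sum weighted_sum_nonneg)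
  finally show ?thesis
    by (simp add: algebra_simps)
qed

lemma eliminating_merge_exists:
  assumes "distribution \<tau>" "a < x" "x < b"
    and "\<And>y. a < y \<Longrightarrow> y < b \<Longrightarrow> \<tau> y = 0"
    and "moment 1 \<tau> = moment 0 \<tau> * x"
    and "supp \<tau> - {a..b} \<noteq> {}"
  obtains p s q t e w where "admissible_merge \<tau> p s q t e" "e \<in> {a, b}"
    "\<not> (a < p \<and> p < b)" "\<not> (a < q \<and> q < b)"
    "w \<in> supp \<tau> - {a..b}" "merge \<tau> p s q t e w = 0"
proof -
  have pos: "\<And>y. y \<in> supp \<tau> \<Longrightarrow> 0 < \<tau> y"
    using assms(1) by (auto simp: distribution_def supp_def order_le_less)
  consider (both) p q where "p \<in> supp \<tau>" "p < a" "q \<in> supp \<tau>" "b < q"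
    | (left) p where "p \<in> supp \<tau>" "p < a" "\<forall>y\<in>supp \<tau>. y \<le> b"
    | (right) q where "q \<in> supp \<tau>" "b < q" "\<forall>y\<in>supp \<tau>. a \<le> y"
    using assms(6) by (force simp: not_le)
  then show thesis
  proof cases
    case both
    obtain s t where adm: "admissible_merge \<tau> p s q t a"
      and "\<tau> p * (a - p) \<le> \<tau> q * (q - a) \<Longrightarrow> s = \<tau> p"
      and "\<tau> q * (q - a) \<le> \<tau> p * (a - p) \<Longrightarrow> t = \<tau> q"
      using admissible_merge_exists[of p a q \<tau>] both assms(2,3) pos by auto
    then have "s = \<tau> p \<or> t = \<tau> q"
      by linarith
    then have "merge \<tau> p s q t a p = 0 \<or> merge \<tau> p s q t a q = 0"
      using adm both assms(2,3) by (auto simp: merge_def point_mass_def admissible_merge_def)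
    then show thesis
      using that[OF adm, of p] that[OF adm, of q] both assms(2,3) by auto
  next
    case left
    have bound: "\<tau> p * (a - p) \<le> \<tau> b * (b - a)"
      using lever_left_of_interval_le[OF assms(1-5) left] .
    moreover have "0 < \<tau> p * (a - p)"
      using left pos by simp
    ultimately have "0 < \<tau> b"
      using assms(2,3) by (smt (verit) mult_nonpos_nonneg)
    then obtain s t where adm: "admissible_merge \<tau> p s b t a"
      and "\<tau> p * (a - p) \<le> \<tau> b * (b - a) \<Longrightarrow> s = \<tau> p"
      and "\<tau> b * (b - a) \<le> \<tau> p * (a - p) \<Longrightarrow> t = \<tau> b"
      using admissible_merge_exists[of p a b \<tau>] left assms(2,3) pos by auto
    with bound show thesis
      using that[OF adm, of p] left assms(2,3)
      by (auto simp: merge_def point_mass_def admissible_merge_def)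
  next
    case right
    have bound: "\<tau> q * (q - b) \<le> \<tau> a * (b - a)"
      using lever_right_of_interval_le[OF assms(1-5) right] .
    moreover have "0 < \<tau> q * (q - b)"
      using right pos by simp
    ultimately have "0 < \<tau> a"
      using assms(2,3) by (smt (verit) mult_nonpos_nonneg)
    then obtain s t where adm: "admissible_merge \<tau> a s q t b"
      and "\<tau> a * (b - a) \<le> \<tau> q * (q - b) \<Longrightarrow> s = \<tau> a"
      and "\<tau> q * (q - b) \<le> \<tau> a * (b - a) \<Longrightarrow> t = \<tau> q"
      using admissible_merge_exists[of a b q \<tau>] right assms(2,3) pos by auto
    with bound show thesis
      using that[OF adm, of q] right assms(2,3)
      by (auto simp: merge_def point_mass_def admissible_merge_def)
  qed
qed

lemma eq_collapse_point_mass: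
  assumes "a < x" "x < b" "finite (supp \<tau>)" "supp \<tau> \<subseteq> {a, b}"
    and "moment 0 \<tau> = m" "moment 1 \<tau> = m * x"
  shows "\<tau> = collapse a b (point_mass x m)"
proof (rule eq_if_moments_eq_off_two_points)
  show "\<tau> y = collapse a b (point_mass x m) y" if "y \<noteq> a" "y \<noteq> b" for y
  proof (cases "a < y \<and> y < b")
    case False
    then show ?thesis
      using assms(1,2,4) that by (auto simp: supp_def collapse_outside point_mass_def)
  qed (use assms(4) that in \<open>auto simp: supp_def collapse_interior\<close>)
qed (use assms in \<open>simp_all add: finite_supp_collapse moment_collapse\<close>)

lemma collapse_point_mass_split_le:
  assumes "a < x" "x < b" "distribution \<tau>"
    and "\<And>y. a < y \<Longrightarrow> y < b \<Longrightarrow> \<tau> y = 0"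
    and "moment 0 \<tau> = m" "moment 1 \<tau> = m * x"
  shows "collapse a b (point_mass x m) \<preceq>\<^sub>s \<tau>"
  using assms(3-)
proof (induction "card (supp \<tau> - {a..b})" arbitrary: \<tau> rule: less_induct)
  case less
  have fin: "finite (supp \<tau>)"
    using less.prems(1) by (simp add: distribution_def)
  show ?case
  proof (cases "supp \<tau> - {a..b} = {}")
    case True
    have "supp \<tau> \<subseteq> {a, b}"
      using True less.prems(2) by (force simp: supp_def)
    then show ?thesis
      using eq_collapse_point_mass[OF assms(1,2) fin _ less.prems(3,4)] by simp
  next
    case False
    moreover have "moment 1 \<tau> = moment 0 \<tau> * x"
      using less.prems(3,4) by simp
    ultimately obtain p s q t e w where adm: "admissible_merge \<tau> p s q t e"
      and e: "e \<in> {a, b}" and p: "\<not> (a < p \<and> p < b)" and q: "\<not> (a < q \<and> q < b)"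
      and w: "w \<in> supp \<tau> - {a..b}" "merge \<tau> p s q t e w = 0"
      using eliminating_merge_exists[OF less.prems(1) assms(1,2) less.prems(2)] by metis
    note merged = merge_split_le[OF less.prems(1) adm]
    have "collapse a b (point_mass x m) \<preceq>\<^sub>s merge \<tau> p s q t e"
    proof (rule less.hyps)
      have "supp (merge \<tau> p s q t e) - {a..b} \<subseteq> supp \<tau> - {a..b} - {w}"
        using supp_merge[OF adm] e w(2) assms(1,2) by (auto simp: supp_def)
      then have "card (supp (merge \<tau> p s q t e) - {a..b}) \<le> card (supp \<tau> - {a..b} - {w})"
        using fin by (intro card_mono) auto
      also have "\<dots> < card (supp \<tau> - {a..b})"
        using fin w(1) by (intro card_Diff1_less) auto
      finally show "card (supp (merge \<tau> p s q t e) - {a..b}) < card (supp \<tau> - {a..b})" .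
      show "merge \<tau> p s q t e y = 0" if "a < y" "y < b" for y
        using that e p q less.prems(2)[OF that] by (auto simp: merge_def point_mass_def)
    qed (use merged(1) fin adm less.prems(3,4) in \<open>simp_all add: moment_merge\<close>)
    then show ?thesis
      using merged(2) by (rule split_le_trans)
  qed
qed

lemma collapse_basic_split_le:
  assumes "basic_split \<mu> \<mu>'"
  shows "collapse a b \<mu> \<preceq>\<^sub>s collapse a b \<mu>'"
proof -
  obtain x \<nu> where dist_\<mu>: "distribution \<mu>" and pos: "0 < \<mu> x" and dist_\<nu>: "distribution \<nu>"
    and \<nu>: "moment 0 \<nu> = \<mu> x" "moment 1 \<nu> = x * \<mu> x"
    and \<mu>': "\<mu>' = (\<lambda>y. (if y = x then 0 else \<mu> y) + \<nu> y)"
    using assms unfolding basic_split_def by blast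
  define \<mu>\<^sub>0 where "\<mu>\<^sub>0 = (\<lambda>y. if y = x then 0 else \<mu> y)"
  have dist_\<mu>\<^sub>0: "distribution \<mu>\<^sub>0" and \<mu>: "\<mu> = (\<lambda>y. \<mu>\<^sub>0 y + point_mass x (\<mu> x) y)"
    unfolding \<mu>\<^sub>0_def using distribution_remove_point[OF dist_\<mu>] by blast+
  have fin: "finite (supp \<mu>\<^sub>0)" "finite (supp \<nu>)"
    using dist_\<mu>\<^sub>0 dist_\<nu> by (simp_all add: distribution_def)
  have dist_collapse_\<nu>: "distribution (collapse a b \<nu>)"
    using dist_\<nu> by (rule distribution_collapse)
  have moments: "moment 0 (collapse a b \<nu>) = \<mu> x" "moment 1 (collapse a b \<nu>) = \<mu> x * x"
    using \<nu> fin(2) by (simp_all add: moment_collapse mult.commute)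
  have "collapse a b (point_mass x (\<mu> x)) \<preceq>\<^sub>s collapse a b \<nu>"
  proof (cases "a < x \<and> x < b")
    case True
    then show ?thesis
      using dist_collapse_\<nu> moments
      by (intro collapse_point_mass_split_le) (simp_all add: collapse_interior)
  next
    case False
    then have "collapse a b (point_mass x (\<mu> x)) = point_mass x (\<mu> x)"
      by (intro collapse_eq_self) (auto simp: point_mass_def)
    then show ?thesis
      using point_mass_split_le[OF dist_collapse_\<nu> pos moments] by simp
  qed
  then have "(\<lambda>y. collapse a b \<mu>\<^sub>0 y + collapse a b (point_mass x (\<mu> x)) y)
      \<preceq>\<^sub>s (\<lambda>y. collapse a b \<mu>\<^sub>0 y + collapse a b \<nu> y)"
    by (rule split_le_add[OF distribution_collapse[OF dist_\<mu>\<^sub>0]])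
  moreover have "\<mu>' = (\<lambda>y. \<mu>\<^sub>0 y + \<nu> y)"
    by (simp add: \<mu>' \<mu>\<^sub>0_def)
  ultimately show ?thesis
    using fin by (subst \<mu>) (simp add: collapse_add)
qed

lemma collapse_split_le_mono:
  assumes "\<mu> \<preceq>\<^sub>s \<mu>'"
  shows "collapse a b \<mu> \<preceq>\<^sub>s collapse a b \<mu>'"
  using assms unfolding split_le_def
proof (induction rule: rtranclp_induct)
  case (step \<mu>\<^sub>1 \<mu>\<^sub>2)
  then show ?case
    using collapse_basic_split_le[of \<mu>\<^sub>1 \<mu>\<^sub>2 a b] by (simp add: split_le_def)
qed simp

lemma extreme_result_eq_collapse:
  assumes "distribution \<mu>" "extreme_result a b \<mu> \<mu>'"
  shows "\<mu>' = collapse a b \<mu>"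
proof (rule eq_if_moments_eq_off_two_points)
  show "\<mu>' y = collapse a b \<mu> y" if "y \<noteq> a" "y \<noteq> b" for y
  proof (cases "a < y \<and> y < b")
    case False
    with assms(2) that show ?thesis
      by (auto simp: extreme_result_def collapse_outside)
  qed (use assms(2) in \<open>simp add: extreme_result_def collapse_interior\<close>)
qed (use assms in \<open>simp_all add: distribution_def extreme_result_def finite_supp_collapse moment_collapse\<close>)

lemma collapse_move_eq_zero:
  assumes "is_move a b \<delta>"
  shows "collapse a b \<delta> = (\<lambda>_. 0)"
proof (rule eq_if_moments_eq_off_two_points)
  show "collapse a b \<delta> y = 0" if "y \<noteq> a" "y \<noteq> b" for y
  proof (cases "a < y \<and> y < b")
    case False
    with assms that have "\<delta> y = 0"
      by (force simp: is_move_def supp_def)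
    with False that show ?thesis
      by (simp add: collapse_outside)
  qed (simp add: collapse_interior)
qed (use assms in \<open>simp_all add: is_move_def signed_distribution_def
      finite_supp_collapse moment_collapse\<close>)

theorem mainTheorem10:
  fixes \<mu> \<mu>' \<delta> \<mu>'' :: "real \<Rightarrow> real" and a b :: real
  assumes "distribution \<mu>"
    and "\<mu> \<preceq>\<^sub>s \<mu>'"
    and "is_move a b \<delta>"
    and "move_applies \<delta> \<mu>"
    and "extreme_result a b \<mu>' \<mu>''"
  shows "apply_move \<delta> \<mu> \<preceq>\<^sub>s \<mu>''"
proof -
  have "apply_move \<delta> \<mu> \<preceq>\<^sub>s collapse a b (apply_move \<delta> \<mu>)"
    using assms(4) by (intro split_le_collapse) (simp add: move_applies_def apply_move_def)
  also have "collapse a b (apply_move \<delta> \<mu>) = collapse a b \<mu>"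
    using assms(1,3) collapse_move_eq_zero[OF assms(3)]
    by (simp add: apply_move_def collapse_add distribution_def is_move_def signed_distribution_def)
  also have "collapse a b \<mu> \<preceq>\<^sub>s collapse a b \<mu>'"
    using assms(2) by (rule collapse_split_le_mono)
  also have "collapse a b \<mu>' = \<mu>''"
    using extreme_result_eq_collapse[OF split_le_distribution[OF assms(2,1)] assms(5)] by simp
  finally show ?thesis .
qed

end
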